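(* Let $q$ be an even prime power (a power of $2$), $m,n\ge1$, let $\mathscr{C}\subseteq\mathrm{GF}(q^m)^n$ be a scalable code and let $\mathscr{B}$ be a basis of $\mathrm{GF}(q^m)$ over $\mathrm{GF}(q)$. If $\mathrm{Im}_{\mathscr{B}}(\mathscr{C})\subseteq\mathrm{GF}(q)^{mn}$ is self-orthogonal w.r.t. the canonical inner product $\sum_{i=1}^{mn}x_iy_i$, then $\mathscr{C}$ is self-orthogonal w.r.t. the canonical inner product $\sum_{i=1}^n x_iy_i$ on $\mathrm{GF}(q^m)^n$.
   Context: $\mathrm{Tr}:\mathrm{GF}(q^m)\to\mathrm{GF}(q)$, $\mathrm{Tr}(a)=\sum_{i=0}^{m-1}a^{q^i}$. The dual basis of a basis $\{\gamma_1,\ldots,\gamma_m\}$ is the unique basis $\{\beta_1,\ldots,\beta_m\}$ with $\mathrm{Tr}(\gamma_i\beta_j)=\delta_{ij}$. A code $\mathscr{C}\subseteq\mathrm{GF}(q^m)^n$ is scalable if $x\in\mathscr{C}\Rightarrow\alpha x\in\mathscr{C}$ for all $\alpha\in\mathrm{GF}(q^m)$. For a basis $\mathscr{B}$ with dual basis $\{\beta_1,\ldots,\beta_m\}$, $\mathrm{Im}_{\mathscr{B}}(\mathscr{C})=\{(\mathrm{Tr}(\beta_1x_1),\ldots,\mathrm{Tr}(\beta_1x_n),\ldots,\mathrm{Tr}(\beta_mx_1),\ldots,\mathrm{Tr}(\beta_mx_n)):x\in\mathscr{C}\}$. A code $D$ is self-orthogonal w.r.t. a form $g$ if $g(x,y)=0$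 for all $x,y\in D$. *)

theory Defs
  imports Main
begin

definition trace :: "nat \<Rightarrow> nat \<Rightarrow> 'a::field \<Rightarrow> 'a" where
  "trace q m a = (\<Sum>i<m. a ^ (q ^ i))"

definition is_subfield :: "'a::field set \<Rightarrow> bool" where
  "is_subfield K \<longleftrightarrow> 0 \<in> K \<and> 1 \<in> K \<and>
     (\<forall>x\<in>K. \<forall>y\<in>K. x + y \<in> K \<and> x * y \<in> K) \<and>
     (\<forall>x\<in>K. - x \<in> K \<and> inverse x \<in> K)"

definition is_basis_over :: "'a::field set \<Rightarrow> nat \<Rightarrow> (nat \<Rightarrow> 'a) \<Rightarrow> bool" where
  "is_basis_over K m gamma \<longleftrightarrow>
     (\<forall>a. \<exists>!c. (\<forall>i<m. c i \<in> K) \<and> (\<forall>i\<ge>m. c i = 0) \<and> a = (\<Sum>i<m. c i * gamma i))"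

definition dual_basis :: "nat \<Rightarrow> nat \<Rightarrow> (nat \<Rightarrow> 'a::field) \<Rightarrow> (nat \<Rightarrow> 'a) \<Rightarrow> bool" where
  "dual_basis q m gamma beta \<longleftrightarrow>
     (\<forall>i<m. \<forall>j<m. trace q m (gamma i * beta j) = (if i = j then 1 else 0))"

definition scalable :: "'a::field list set \<Rightarrow> bool" where
  "scalable C \<longleftrightarrow> (\<forall>x\<in>C. \<forall>\<alpha>. map (\<lambda>xi. \<alpha> * xi) x \<in> C)"

text \<open>Im_B(C), built from the dual basis beta of B.\<close>
definition image_code :: "nat \<Rightarrow> nat \<Rightarrow> (nat \<Rightarrow> 'a::field) \<Rightarrow> 'a list set \<Rightarrow> 'a list set" where
  "image_code q m beta C =
     {concat (map (\<lambda>j. map (\<lambda>xi. trace q m (beta j * xi)) x) [0..<m]) | x. x \<in> C}"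

definition dot :: "'a::field list \<Rightarrow> 'a list \<Rightarrow> 'a" where
  "dot xs ys = sum_list (map2 (*) xs ys)"

definition self_orthogonal :: "'a::field list set \<Rightarrow> bool" where
  "self_orthogonal D \<longleftrightarrow> (\<forall>x\<in>D. \<forall>y\<in>D. dot x y = 0)"

end

theory Submission
  imports Defs "HOL-Number_Theory.Residues" "HOL-Computational_Algebra.Polynomial"
begin

text \<open>
  Write \<open>Tr\<close> for the trace and \<open>\<beta>\<^sub>j\<close> for the dual basis. For \<open>x, y \<in> C\<close> and all scalars
  \<open>z, \<alpha>\<close>, the words \<open>z x\<close> and \<open>\<alpha> y\<close> lie in \<open>C\<close>, so orthogonality of their images reads
  \<open>\<Sum>\<^sub>j \<Sum>\<^sub>i Tr(\<beta>\<^sub>j z x\<^sub>i) Tr(\<beta>\<^sub>j \<alpha> y\<^sub>i) = 0\<close>.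
  Expanding \<open>Tr(b \<alpha>) = \<Sum>\<^sub>k b\<^bsup>q^k\<^esup> \<alpha>\<^bsup>q^k\<^esup>\<close> turns the left-hand side into a polynomial in \<open>\<alpha>\<close> of
  degree less than \<open>q\<^sup>m\<close> vanishing on the whole field, so its coefficient of \<open>\<alpha>\<close> vanishes;
  doing the same for \<open>z\<close> leaves \<open>\<Sum>\<^sub>j \<Sum>\<^sub>i \<beta>\<^sub>j\<^sup>2 x\<^sub>i y\<^sub>i = (\<Sum>\<^sub>j \<beta>\<^sub>j\<^sup>2) \<langle>x, y\<rangle> = 0\<close>.
  In characteristic 2 we have \<open>\<Sum>\<^sub>j \<beta>\<^sub>j\<^sup>2 = (\<Sum>\<^sub>j \<beta>\<^sub>j)\<^sup>2\<close>, and \<open>\<Sum>\<^sub>j \<beta>\<^sub>j \<noteq> 0\<close> because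
  \<open>Tr(\<gamma>\<^sub>0 \<Sum>\<^sub>j \<beta>\<^sub>j) = 1\<close>; hence \<open>\<langle>x, y\<rangle> = 0\<close>.
\<close>

lemma CHAR_eq_2_if_card_power_of_2:
  assumes "card (UNIV :: 'a::{field,finite} set) = 2 ^ e" and "e \<ge> 1"
  shows "CHAR('a) = 2"
proof -
  have prime: "prime CHAR('a)"
    by (intro prime_CHAR_semidom finite_imp_CHAR_pos) simp
  moreover have "CHAR('a) dvd 2 ^ e"
    using CHAR_dvd_CARD[where 'a='a] assms(1) by simp
  ultimately have "CHAR('a) dvd 2"
    using prime_dvd_power by blast
  with prime show ?thesis
    using primes_dvd_imp_eq two_is_prime_nat by blast
qed

lemma trace_sum:
  fixes f :: "'b \<Rightarrow> 'a::field"
  assumes "prime CHAR('a)" and "q = CHAR('a) ^ k"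
  shows "trace q m (\<Sum>a\<in>A. f a) = (\<Sum>a\<in>A. trace q m (f a))"
proof -
  have "(\<Sum>a\<in>A. f a) ^ (q ^ i) = (\<Sum>a\<in>A. f a ^ (q ^ i))" for i
    using assms by (intro freshmans_dream_sum'[where n = "k * i"]) (simp_all add: power_mult)
  then show ?thesis
    unfolding trace_def by (simp add: sum.swap[of _ A])
qed

text \<open>A \<open>q\<close>-polynomial \<open>\<Sum>\<^sub>k d\<^sub>k t\<^bsup>q^k\<^esup>\<close> with \<open>k < m\<close> has degree below \<open>q\<^sup>m\<close>, so it cannot vanish on
  a field with \<open>q\<^sup>m\<close> elements unless it is the zero polynomial.\<close>
lemma q_polynomial_vanishing_imp_linear_coeff_0:
  fixes d :: "nat \<Rightarrow> 'a::{field,finite}"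
  assumes "card (UNIV :: 'a set) = q ^ m" and "q \<ge> 2" and "m \<ge> 1"
    and "\<And>t. (\<Sum>k<m. d k * t ^ (q ^ k)) = 0"
  shows "d 0 = 0"
proof -
  define p where "p = (\<Sum>k<m. monom (d k) (q ^ k))"
  have "p = 0"
  proof (rule ccontr)
    assume "p \<noteq> 0"
    then have "card {t. poly p t = 0} \<le> degree p"
      by (rule card_poly_roots_bound)
    also have "degree p \<le> q ^ (m - 1)"
      unfolding p_def
    proof (rule degree_sum_le)
      fix k assume "k \<in> {..<m}"
      then have "q ^ k \<le> q ^ (m - 1)"
        using assms(2) by (intro power_increasing) auto
      then show "degree (monom (d k) (q ^ k)) \<le> q ^ (m - 1)"
        using degree_monom_le order_trans by blast
    qed simp
    also have "\<dots> < q ^ m"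
      using assms(2,3) by (intro power_strict_increasing) auto
    finally show False
      using assms(1,4) by (simp add: p_def poly_sum poly_monom)
  qed
  then have "coeff p 1 = 0"
    by simp
  moreover have "coeff p 1 = (\<Sum>k<m. if k = 0 then d k else 0)"
    unfolding p_def coeff_sum coeff_monom
    by (intro sum.cong refl) (use assms(2) in auto)
  ultimately show ?thesis
    using assms(3) by simp
qed

lemma sum_mult_eq_0_if_sum_mult_trace_eq_0:
  fixes a b :: "'b \<Rightarrow> 'a::{field,finite}"
  assumes "card (UNIV :: 'a set) = q ^ m" and "q \<ge> 2" and "m \<ge> 1"
    and "\<And>t. (\<Sum>s\<in>S. a s * trace q m (t * b s)) = 0"
  shows "(\<Sum>s\<in>S. a s * b s) = 0"
proof -
  have "(\<Sum>k<m. (\<Sum>s\<in>S. a s * b s ^ (q ^ k)) * t ^ (q ^ k)) = 0" for t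
    using assms(4)[of t]
    by (simp add: trace_def power_mult_distrib sum_distrib_left sum_distrib_right
        mult_ac sum.swap[of _ S])
  from q_polynomial_vanishing_imp_linear_coeff_0[OF assms(1-3) this] show ?thesis
    by simp
qed

lemma dual_basis_sum_neq_0:
  fixes beta gamma :: "nat \<Rightarrow> 'a::field"
  assumes "prime CHAR('a)" and "q = CHAR('a) ^ k" and "m \<ge> 1"
    and "dual_basis q m gamma beta"
  shows "(\<Sum>j<m. beta j) \<noteq> 0"
proof
  assume sum_eq_0: "(\<Sum>j<m. beta j) = 0"
  have "trace q m (gamma 0 * (\<Sum>j<m. beta j)) = (\<Sum>j<m. trace q m (gamma 0 * beta j))"
    using assms(1,2) by (simp add: sum_distrib_left trace_sum)
  also have "\<dots> = (\<Sum>j<m. if j = 0 then 1 else 0)"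
    using assms(4) by (intro sum.cong) (auto simp: dual_basis_def)
  also have "\<dots> = 1"
    using assms(3) by simp
  finally have "trace q m (0::'a) = 1"
    by (simp add: sum_eq_0)
  moreover have "q > 0"
    using assms(1,2) prime_gt_0_nat by simp
  then have "trace q m (0::'a) = 0"
    by (simp add: trace_def power_0_left)
  ultimately show False
    by simp
qed

definition image_word :: "nat \<Rightarrow> nat \<Rightarrow> (nat \<Rightarrow> 'a::field) \<Rightarrow> 'a list \<Rightarrow> 'a list" where
  "image_word q m beta x = concat (map (\<lambda>j. map (\<lambda>xi. trace q m (beta j * xi)) x) [0..<m])"

lemma image_code_eq_image: "image_code q m beta C = image_word q m beta ` C"
  by (auto simp: image_code_def image_word_def)

lemma dot_eq_sum_nth: "length xs = length ys \<Longrightarrow> dot xs ys = (\<Sum>i<length xs. xs ! i * ys ! i)"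
  by (simp add: dot_def sum_list_sum_nth atLeast0LessThan)

lemma dot_concat_map:
  assumes "length x = length y"
  shows "dot (concat (map (\<lambda>j. map (f j) x) js)) (concat (map (\<lambda>j. map (f j) y) js))
    = (\<Sum>j\<leftarrow>js. dot (map (f j) x) (map (f j) y))"
proof (induction js)
  case (Cons j js)
  have "length (concat (map (\<lambda>j. map (f j) x) js)) = length (concat (map (\<lambda>j. map (f j) y) js))"
    using assms by (simp add: length_concat o_def)
  with Cons assms show ?case
    by (simp add: dot_def)
qed (simp add: dot_def)

lemma dot_image_word:
  assumes "length x = length y"
  shows "dot (image_word q m beta x) (image_word q m beta y)
    = (\<Sum>j<m. \<Sum>i<length x. trace q m (beta j * x ! i) * trace q m (beta j * y ! i))"
  using assms
  by (simp add: image_word_def dot_concat_map dot_eq_sum_nth sum_list_distinct_conv_sum_set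
      atLeast0LessThan)

lemma sum_square_mult_dot_eq_0_if_scaled_images_orthogonal:
  fixes beta :: "nat \<Rightarrow> 'a::{field,finite}" and x y :: "'a list"
  assumes "card (UNIV :: 'a set) = q ^ m" and "q \<ge> 2" and "m \<ge> 1"
    and "length x = length y"
    and "\<And>z \<alpha>. dot (image_word q m beta (map ((*) z) x)) (image_word q m beta (map ((*) \<alpha>) y)) = 0"
  shows "(\<Sum>j<m. beta j ^ 2) * dot x y = 0"
proof -
  define S where "S = {..<m} \<times> {..<length x}"
  have "(\<Sum>(j, i)\<in>S. trace q m (z * (beta j * x ! i)) * trace q m (\<alpha> * (beta j * y ! i))) = 0"
    for z \<alpha>
    using assms(4) assms(5)[of z \<alpha>]
    by (simp add: dot_image_word S_def sum.cartesian_product mult.left_commute)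
  then have "(\<Sum>(j, i)\<in>S. trace q m (z * (beta j * x ! i)) * (beta j * y ! i)) = 0" for z
    using sum_mult_eq_0_if_sum_mult_trace_eq_0[OF assms(1-3),
        where a = "\<lambda>(j, i). trace q m (z * (beta j * x ! i))" and S = S
          and b = "\<lambda>(j, i). beta j * y ! i"]
    by (simp add: case_prod_unfold)
  then have "(\<Sum>(j, i)\<in>S. (beta j * y ! i) * trace q m (z * (beta j * x ! i))) = 0" for z
    by (simp add: mult.commute)
  then have "(\<Sum>(j, i)\<in>S. (beta j * y ! i) * (beta j * x ! i)) = 0"
    using sum_mult_eq_0_if_sum_mult_trace_eq_0[OF assms(1-3),
        where a = "\<lambda>(j, i). beta j * y ! i" and S = S and b = "\<lambda>(j, i). beta j * x ! i"]
    by (simp add: case_prod_unfold)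
  moreover have "(\<Sum>(j, i)\<in>S. (beta j * y ! i) * (beta j * x ! i)) = (\<Sum>j<m. beta j ^ 2) * dot x y"
    using assms(4)
    by (simp add: S_def dot_eq_sum_nth sum.cartesian_product[symmetric] sum_distrib_left
        sum_distrib_right power2_eq_square mult_ac)
      (rule sum.swap)
  ultimately show ?thesis
    by simp
qed

theorem proposition2:
  fixes K :: "'a::{field,finite} set" and q m n k :: nat
    and gamma beta :: "nat \<Rightarrow> 'a" and C :: "'a list set"
  assumes "q = 2 ^ k" and "k \<ge> 1" and "m \<ge> 1" and "n \<ge> 1"
    and "card (UNIV :: 'a set) = q ^ m"
    and "is_subfield K" and "card K = q"
    and "is_basis_over K m gamma"
    and "dual_basis q m gamma beta"
    and "\<forall>x\<in>C. length x = n"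
    and "scalable C"
    and "self_orthogonal (image_code q m beta C)"
  shows "self_orthogonal C"
proof -
  have "card (UNIV :: 'a set) = 2 ^ (k * m)" and "k * m \<ge> 1"
    using assms(1,2,3,5) by (simp_all add: power_mult)
  then have char: "CHAR('a) = 2"
    by (rule CHAR_eq_2_if_card_power_of_2)
  then have q: "q = CHAR('a) ^ k" and "q \<ge> 2"
    using assms(1,2) by (simp_all add: self_le_power)
  have "(\<Sum>j<m. beta j ^ 2) = (\<Sum>j<m. beta j) ^ 2"
    using char by (simp add: freshmans_dream_sum)
  with dual_basis_sum_neq_0[OF _ q assms(3,9)] char
  have weight_neq_0: "(\<Sum>j<m. beta j ^ 2) \<noteq> 0"
    by simp
  show ?thesis
    unfolding self_orthogonal_def
  proof (intro ballI)
    fix x y assume "x \<in> C" and "y \<in> C"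
    then have "dot (image_word q m beta (map ((*) z) x)) (image_word q m beta (map ((*) \<alpha>) y)) = 0"
      for z \<alpha>
      using assms(11,12) by (simp add: scalable_def self_orthogonal_def image_code_eq_image)
    then have "(\<Sum>j<m. beta j ^ 2) * dot x y = 0"
      using \<open>x \<in> C\<close> \<open>y \<in> C\<close> assms(3,5,10) \<open>q \<ge> 2\<close>
      by (intro sum_square_mult_dot_eq_0_if_scaled_images_orthogonal) auto
    with weight_neq_0 show "dot x y = 0"
      by simp
  qed
qed

end
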